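(* Let $p(t)=\sum_{i=0}^\infty a_it^i$ with $0\le a_i<1$ for all $i$ and $\sum_i a_i=1$, and write $p(t)=t^rp_0(t)$ where $r\ge0$ is an integer, $p_0(0)\neq0$, and $p_0$ has at least two nonzero coefficients; let $Q=\{q\ge0:\ \text{the coefficient of } t^q \text{ in } p_0 \text{ is nonzero}\}$. Let $p^{[1]}=p$, $p^{[n+1]}=p(p^{[n]})$, $p^{[n]}(t)=\sum_k a_k^{[n]}t^k$, and $a=\lim_{n\to\infty}a_0^{[n]}$. Fix $m\in\mathbb N$, let $C_m$ be the cyclic group of order $m$ generated by $\bar t$ with identity $e=\bar t^0$, and for a power series $f(t)=\sum_kf_kt^k$ with absolutely summable coefficients put $f(\bar t)=\sum_kf_k\bar t^k\in R[C_m]$. Let $G_{p_0}$ be the subgroup of $C_m$ generated by $\{\bar t^q: q\in Q\}$ and $c_{p_0}=\frac1{|G_{p_0}|}\sum_{g\in G_{p_0}}g$. Let $d\ge1$ and distinct $m_0,\dots,m_{d-1}\in\{0,\dots,m-1\}$ be such that $r^{kd+i}\equiv m_i \pmod m$ for all $i\in\{0,\dots,d-1\}$ and all sufficiently large $k$. Then: (1) If $\bigcap_{i=0}^{d-1}\bar t^{m_i}G_{p_0}=\emptyset$, then $\lim_{n\to\infty}p^{[n]}(\bar t)$ does not exist. (2) If $\bigcap_{i=0}^{d-1}\bar t^{m_i}G_{p_0}\neq\emptyset$, then $\bar t^{m_i}G_{p_0}=\bar t^{m_j}G_{p_0}$ for all $i,j\in\{0,\dots,d-1\}$, the limit $\lim_{n\to\infty}p^{[n]}(\bar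 t)$ exists, and $$\lim_{n\to\infty}p^{[n]}(\bar t)=\bar t^{m_0}c_{p_0}+(e-c_{p_0})a.$$
   Context: $R[C_m]$ is the real group algebra of $C_m$ (equivalently $\mathbb R[t]/(t^m-1)$ with $\bar t$ the class of $t$), with the Euclidean topology. The limit $a=\lim a_0^{[n]}$ exists since $(a_0^{[n]})$ is monotone and bounded. The sequence $(r^k \bmod m)_k$ is eventually periodic, which guarantees the existence of $d$ and $m_0,\dots,m_{d-1}$ as described. *)

theory Defs
  imports "HOL-Analysis.Analysis" "HOL-Algebra.Elementary_Groups" "HOL-Algebra.Generated_Groups"
begin

text \<open>Power series are represented by their coefficient sequences nat => real.
  pow_coeff f i k is the coefficient of t^k in f(t)^i (Cauchy product).\<close>

fun pow_coeff :: "(nat \<Rightarrow> real) \<Rightarrow> nat \<Rightarrow> nat \<Rightarrow> real" where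
  "pow_coeff f 0 k = (if k = 0 then 1 else 0)"
| "pow_coeff f (Suc i) k = (\<Sum>j\<le>k. f j * pow_coeff f i (k - j))"

definition comp_coeff :: "(nat \<Rightarrow> real) \<Rightarrow> (nat \<Rightarrow> real) \<Rightarrow> nat \<Rightarrow> real" where
  "comp_coeff a f k = (\<Sum>i. a i * pow_coeff f i k)"

text \<open>Iterates: iter a 0 = t, iter a (Suc n) = p(iter a n); hence iter a n = p^[n] for n >= 1.\<close>
fun iter :: "(nat \<Rightarrow> real) \<Rightarrow> nat \<Rightarrow> nat \<Rightarrow> real" where
  "iter a 0 = (\<lambda>k. if k = 1 then 1 else 0)"
| "iter a (Suc n) = comp_coeff a (iter a n)"

text \<open>Elements of R[C_m] are functions int => real supported on {0..<m}; the group element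
  bar t^j is the residue j in carrier (integer_mod_group m).  The topology is the product
  topology, which on this finite-dimensional subspace is the Euclidean one.\<close>

definition ev_Cm :: "nat \<Rightarrow> (nat \<Rightarrow> real) \<Rightarrow> int \<Rightarrow> real" where
  "ev_Cm m f = (\<lambda>j. if j \<in> {0..<int m} then (\<Sum>k. if int k mod int m = j then f k else 0) else 0)"

definition gr_basis :: "nat \<Rightarrow> int \<Rightarrow> int \<Rightarrow> real" where
  "gr_basis m g = (\<lambda>j. if j \<in> {0..<int m} \<and> j = g mod int m then 1 else 0)"

definition gr_mult :: "nat \<Rightarrow> (int \<Rightarrow> real) \<Rightarrow> (int \<Rightarrow> real) \<Rightarrow> int \<Rightarrow> real" where
  "gr_mult m x y = (\<lambda>j. if j \<in> {0..<int m}
      then (\<Sum>i\<in>{0..<int m}. x i * y ((j - i) mod int m)) else 0)"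

definition gr_sum :: "nat \<Rightarrow> int set \<Rightarrow> int \<Rightarrow> real" where
  "gr_sum m S = (\<lambda>j. \<Sum>g\<in>S. gr_basis m g j)"

definition G_p0 :: "nat \<Rightarrow> (nat \<Rightarrow> real) \<Rightarrow> nat \<Rightarrow> int set" where
  "G_p0 m a r = generate (integer_mod_group m) {int q mod int m | q. a (r + q) \<noteq> 0}"

definition c_p0 :: "nat \<Rightarrow> (nat \<Rightarrow> real) \<Rightarrow> nat \<Rightarrow> int \<Rightarrow> real" where
  "c_p0 m a r = (\<lambda>j. (1 / real (card (G_p0 m a r))) * gr_sum m (G_p0 m a r) j)"

definition coset_Cm :: "nat \<Rightarrow> int \<Rightarrow> int set \<Rightarrow> int set" where
  "coset_Cm m g H = l_coset (integer_mod_group m) g H"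

end

(*
  Let P be the power series p, as a function on the closed unit disc. The coefficients of the
  iterates p^[n] are nonnegative with sum 1, so the images of p^[n] in R[C_m] are determined by
  their Fourier transforms, whose value at the character j is P^n(zeta^j), zeta = exp(2 pi i / m).

  If the character is trivial on G_p0, then zeta^(j i) = zeta^(j r) on the support of p, hence
  P^n(zeta^j) = zeta^(j r^n), which is eventually periodic with the values zeta^(j m_i).
  Otherwise zeta^(j r) and zeta^(j (r + q)) differ for some q in Q, so |P(zeta^j)| < 1, and every
  orbit of P starting in the open unit disc tends to the fixed point a = lim a_0^[n]: indeed
  |P^n w - P^n 0| <= P^n |w| - P^n 0, and on [0, 1) the real orbits tend to a because P is
  strictly convex.

  So the limit exists iff all characters trivial on G_p0 agree on the m_i, i.e. iff the cosets
  t^(m_i) G_p0 coincide, and then it is the element with the Fourier transform of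
  t^(m_0) c_p0 + (e - c_p0) a.
*)

theory Submission
  imports Defs
begin

section \<open>Power series with nonnegative coefficients\<close>

definition pgf :: "(nat \<Rightarrow> real) \<Rightarrow> 'a::{real_normed_field,banach} \<Rightarrow> 'a" where
  "pgf a w = (\<Sum>i. of_real (a i) * w ^ i)"

lemma summable_norm_powser_nonneg:
  fixes z :: "'a::{real_normed_field,banach}"
  assumes "\<And>k. 0 \<le> f k" and "summable f" and "norm z \<le> 1"
  shows "summable (\<lambda>k. norm (of_real (f k) * z ^ k))"
proof (rule summable_comparison_test'[OF \<open>summable f\<close>])
  fix k
  have "f k * norm z ^ k \<le> f k"
    using assms by (simp add: mult_left_le power_le_one)
  then show "norm (norm (of_real (f k) * z ^ k)) \<le> f k"
    using assms by (simp add: norm_mult norm_power)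
qed

lemma abs_summable_on_double_series:
  fixes h :: "nat \<Rightarrow> nat \<Rightarrow> 'a::real_normed_vector" and H :: "nat \<Rightarrow> nat \<Rightarrow> real"
  assumes dom: "\<And>i k. norm (h i k) \<le> H i k"
    and rows: "\<And>i. summable (H i)" and total: "summable (\<lambda>i. \<Sum>k. H i k)"
  shows "(\<lambda>(i, k). h i k) abs_summable_on UNIV \<times> UNIV"
proof -
  have H_nonneg: "0 \<le> H i k" for i k
    using dom[of i k] norm_ge_zero order_trans by blast
  have "(\<lambda>(i, k). H i k) summable_on UNIV \<times> UNIV"
  proof (rule summable_on_SigmaI[where g = "\<lambda>i. \<Sum>k. H i k"])
    show "((\<lambda>k. case (i, k) of (i, k) \<Rightarrow> H i k) has_sum (\<Sum>k. H i k)) UNIV" for i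
      using sums_nonneg_imp_has_sum[OF summable_sums[OF rows[of i]] H_nonneg] by simp
    have "0 \<le> (\<Sum>k. H i k)" for i
      using rows H_nonneg by (rule suminf_nonneg)
    then show "(\<lambda>i. \<Sum>k. H i k) summable_on UNIV"
      by (rule summable_nonneg_imp_summable_on[OF total])
    show "0 \<le> (case (i, k) of (i, k) \<Rightarrow> H i k)" for i k
      by (simp add: H_nonneg)
  qed
  then show ?thesis
    by (rule summable_on_comparison_test) (auto simp: dom)
qed

lemma sums_double_series_swap:
  fixes h :: "nat \<Rightarrow> nat \<Rightarrow> 'a::banach" and H :: "nat \<Rightarrow> nat \<Rightarrow> real"
  assumes dom: "\<And>i k. norm (h i k) \<le> H i k"
    and rows: "\<And>i. summable (H i)" and total: "summable (\<lambda>i. \<Sum>k. H i k)"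
  shows "(\<lambda>k. \<Sum>i. h i k) sums (\<Sum>i. \<Sum>k. h i k)"
proof -
  have abs: "(\<lambda>(i, k). h i k) abs_summable_on UNIV \<times> UNIV"
    using assms by (rule abs_summable_on_double_series)
  then obtain S where S: "((\<lambda>(i, k). h i k) has_sum S) (UNIV \<times> UNIV)"
    using abs_summable_summable summable_on_def by blast
  have row_sums: "((\<lambda>k. h i k) has_sum (\<Sum>k. h i k)) UNIV" for i
  proof -
    have ns: "summable (\<lambda>k. norm (h i k))"
      using rows by (rule summable_comparison_test'[where g = "H i"]) (simp add: dom)
    show ?thesis
      using norm_summable_imp_has_sum[OF ns summable_sums[OF summable_norm_cancel[OF ns]]] .
  qed
  have col_sums: "((\<lambda>i. h i k) has_sum (\<Sum>i. h i k)) UNIV" for k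
  proof -
    have "(\<lambda>(k, i). norm (h i k)) summable_on UNIV \<times> UNIV"
      using iffD1[OF summable_on_swap abs] by (simp add: case_prod_unfold)
    then have "(\<lambda>i. norm (h i k)) summable_on UNIV"
      using summable_on_SigmaD1[of "\<lambda>k i. norm (h i k)" UNIV "\<lambda>_. UNIV" k] by simp
    then have ns: "summable (\<lambda>i. norm (h i k))"
      by (rule summable_on_imp_summable)
    show ?thesis
      using norm_summable_imp_has_sum[OF ns summable_sums[OF summable_norm_cancel[OF ns]]] .
  qed
  have "((\<lambda>i. \<Sum>k. h i k) has_sum S) UNIV"
    by (rule has_sum_SigmaD[OF S]) (simp add: row_sums)
  moreover have "((\<lambda>k. \<Sum>i. h i k) has_sum S) UNIV"
  proof (rule has_sum_SigmaD[where f = "\<lambda>(k, i). h i k"])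
    show "((\<lambda>(k, i). h i k) has_sum S) (UNIV \<times> UNIV)"
      using iffD1[OF has_sum_swap S] by (simp add: case_prod_unfold)
    show "((\<lambda>i. case (k, i) of (k, i) \<Rightarrow> h i k) has_sum (\<Sum>i. h i k)) UNIV" for k
      using col_sums by simp
  qed
  ultimately show ?thesis
    by (metis has_sum_imp_sums sums_unique)
qed

lemma pow_coeff_nonneg: "(\<And>k. 0 \<le> f k) \<Longrightarrow> 0 \<le> pow_coeff f i k"
  by (induction i arbitrary: k) (auto intro!: sum_nonneg)

lemma pow_coeff_sums_power:
  assumes "\<And>k. 0 \<le> f k" and "summable f"
  shows "pow_coeff f i sums (suminf f ^ i)"
proof (induction i)
  case 0
  show ?case
    using sums_single[of 0 "\<lambda>_. 1::real"] by (simp add: if_distrib cong: if_cong)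
next
  case (Suc i)
  have "(\<lambda>k. \<Sum>j\<le>k. f j * pow_coeff f i (k - j)) sums (suminf f * suminf (pow_coeff f i))"
    using assms Suc pow_coeff_nonneg[of f, OF assms(1)]
    by (intro Cauchy_product_sums) (auto simp: sums_iff)
  then show ?case
    using Suc by (simp add: sums_iff)
qed

lemma pow_coeff_le_one:
  assumes "\<And>k. 0 \<le> f k" and "summable f" and "suminf f \<le> 1"
  shows "pow_coeff f i k \<le> 1"
proof -
  have "pow_coeff f i k \<le> suminf (pow_coeff f i)"
    using pow_coeff_sums_power[OF assms(1,2)] pow_coeff_nonneg[of f, OF assms(1)]
    by (intro sum_le_suminf[of _ "{k}", simplified]) (auto simp: sums_iff)
  also have "\<dots> = suminf f ^ i"
    using pow_coeff_sums_power[OF assms(1,2)] by (simp add: sums_iff)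
  also have "\<dots> \<le> 1"
    using assms by (intro power_le_one suminf_nonneg) auto
  finally show ?thesis .
qed

lemma pow_coeff_powser_sums:
  fixes z :: "'a::{real_normed_field,banach}"
  assumes nonneg: "\<And>k. 0 \<le> f k" and "summable f" and "norm z \<le> 1"
  shows "(\<lambda>k. of_real (pow_coeff f i k) * z ^ k) sums (\<Sum>k. of_real (f k) * z ^ k) ^ i"
proof (induction i)
  case 0
  have "(\<lambda>k. of_real (pow_coeff f 0 k) * z ^ k) = (\<lambda>k. if k = 0 then 1 else 0)"
    by (rule ext) simp
  then show ?case
    using sums_single[of 0 "\<lambda>_. 1::'a"] by simp
next
  case (Suc i)
  have "summable (pow_coeff f i)"
    using pow_coeff_sums_power[OF assms(1,2)] by (auto simp: sums_iff)
  then have "(\<lambda>k. \<Sum>j\<le>k. (of_real (f j) * z ^ j) * (of_real (pow_coeff f i (k - j)) * z ^ (k - j)))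
      sums ((\<Sum>k. of_real (f k) * z ^ k) * (\<Sum>k. of_real (pow_coeff f i k) * z ^ k))"
    using assms pow_coeff_nonneg[of f, OF nonneg]
    by (intro Cauchy_product_sums summable_norm_powser_nonneg)
  moreover have "(\<Sum>j\<le>k. (of_real (f j) * z ^ j) * (of_real (pow_coeff f i (k - j)) * z ^ (k - j)))
      = of_real (pow_coeff f (Suc i) k) * z ^ k" for k
  proof -
    have "(of_real (f j) * z ^ j) * (of_real (pow_coeff f i (k - j)) * z ^ (k - j))
        = of_real (f j * pow_coeff f i (k - j)) * z ^ k" if "j \<le> k" for j
    proof -
      have "z ^ j * z ^ (k - j) = z ^ k"
        using that by (simp flip: power_add)
      then show ?thesis
        by (metis mult.assoc mult.left_commute of_real_mult)
    qed
    then have "(\<Sum>j\<le>k. (of_real (f j) * z ^ j) * (of_real (pow_coeff f i (k - j)) * z ^ (k - j)))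
        = (\<Sum>j\<le>k. of_real (f j * pow_coeff f i (k - j)) * z ^ k)"
      by (intro sum.cong) auto
    also have "\<dots> = of_real (pow_coeff f (Suc i) k) * z ^ k"
      by (simp add: sum_distrib_right del: of_real_mult)
    finally show ?thesis .
  qed
  ultimately show ?case
    using Suc by (simp add: sums_iff)
qed

lemma summable_comp_coeff_terms:
  assumes "\<And>i. 0 \<le> a i" and "summable a"
    and "\<And>k. 0 \<le> f k" and "summable f" and "suminf f \<le> 1"
  shows "summable (\<lambda>i. a i * pow_coeff f i k)"
  using assms(2)
proof (rule summable_comparison_test')
  show "norm (a i * pow_coeff f i k) \<le> a i" for i
    using assms pow_coeff_nonneg[of f] pow_coeff_le_one[OF assms(3-5)]
    by (simp add: mult_left_le)
qed

lemma comp_coeff_nonneg: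
  assumes "\<And>i. 0 \<le> a i" and "summable a"
    and "\<And>k. 0 \<le> f k" and "summable f" and "suminf f \<le> 1"
  shows "0 \<le> comp_coeff a f k"
  unfolding comp_coeff_def using assms pow_coeff_nonneg[of f]
  by (intro suminf_nonneg summable_comp_coeff_terms) auto

lemma comp_coeff_powser_sums:
  fixes z :: "'a::{real_normed_field,banach}"
  assumes a: "\<And>i. 0 \<le> a i" "summable a"
    and f: "\<And>k. 0 \<le> f k" "summable f" "suminf f \<le> 1" and z: "norm z \<le> 1"
  shows "(\<lambda>k. of_real (comp_coeff a f k) * z ^ k) sums pgf a (\<Sum>k. of_real (f k) * z ^ k)"
proof -
  define F where "F = (\<Sum>k. of_real (f k) * z ^ k)"
  define h where "h i k = of_real (a i) * (of_real (pow_coeff f i k) * z ^ k)" for i k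
  have "(\<lambda>k. \<Sum>i. h i k) sums (\<Sum>i. \<Sum>k. h i k)"
  proof (rule sums_double_series_swap[where H = "\<lambda>i k. a i * pow_coeff f i k"])
    show "norm (h i k) \<le> a i * pow_coeff f i k" for i k
    proof -
      have "pow_coeff f i k * norm z ^ k \<le> pow_coeff f i k"
        using z pow_coeff_nonneg[of f i k] f(1) by (simp add: mult_left_le power_le_one)
      then show ?thesis
        using a(1)[of i] pow_coeff_nonneg[of f i k] f(1)
        by (simp add: h_def norm_mult norm_power mult_left_mono)
    qed
    show "summable (\<lambda>k. a i * pow_coeff f i k)" for i
      using pow_coeff_sums_power[OF f(1,2)] by (auto simp: sums_iff intro: summable_mult)
    have "summable (\<lambda>i. a i * suminf f ^ i)"
    proof (rule summable_comparison_test'[OF a(2)])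
      have "0 \<le> suminf f"
        using f by (intro suminf_nonneg)
      then show "norm (a i * suminf f ^ i) \<le> a i" for i
        using a(1)[of i] f(3) by (simp add: abs_mult mult_left_le power_le_one)
    qed
    then show "summable (\<lambda>i. \<Sum>k. a i * pow_coeff f i k)"
      using pow_coeff_sums_power[OF f(1,2)] by (simp add: suminf_mult sums_iff)
  qed
  moreover have "(\<Sum>k. h i k) = of_real (a i) * F ^ i" for i
    unfolding h_def F_def
    using sums_mult[OF pow_coeff_powser_sums[OF f(1,2) z, of i], of "of_real (a i)"]
    by (simp add: sums_iff)
  moreover have "(\<Sum>i. h i k) = of_real (comp_coeff a f k) * z ^ k" for k
  proof -
    have "(\<lambda>i. of_real (a i * pow_coeff f i k) * z ^ k) sums (of_real (comp_coeff a f k) * z ^ k)"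
      unfolding comp_coeff_def
      by (intro sums_mult2 sums_of_real summable_sums summable_comp_coeff_terms a f)
    then show ?thesis
      by (simp add: h_def sums_iff mult_ac)
  qed
  ultimately show ?thesis
    by (simp add: pgf_def F_def)
qed

lemma norm_powser_sub_head_le:
  fixes w :: "'a::{real_normed_field,banach}"
  assumes nonneg: "\<And>k. 0 \<le> c k" and summable: "summable (\<lambda>k. c k * norm w ^ k)"
  shows "norm ((\<Sum>k. of_real (c k) * w ^ k) - of_real (c 0)) \<le> (\<Sum>k. c k * norm w ^ k) - c 0"
proof -
  have norm_eq: "norm (of_real (c k) * w ^ k) = c k * norm w ^ k" for k
    using nonneg by (simp add: norm_mult norm_power)
  have "summable (\<lambda>k. c (Suc k) * norm w ^ Suc k)"
    using summable_Suc_iff[of "\<lambda>k. c k * norm w ^ k"] summable by simp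
  then have ns: "summable (\<lambda>k. norm (of_real (c (Suc k)) * w ^ Suc k))"
    by (simp only: norm_eq)
  have summable_terms: "summable (\<lambda>k. of_real (c k) * w ^ k)"
    by (rule summable_norm_cancel) (simp add: norm_eq summable)
  have "norm ((\<Sum>k. of_real (c k) * w ^ k) - of_real (c 0)) = norm (\<Sum>k. of_real (c (Suc k)) * w ^ Suc k)"
    using suminf_split_head[OF summable_terms] by simp
  also have "\<dots> \<le> (\<Sum>k. norm (of_real (c (Suc k)) * w ^ Suc k))"
    using ns by (rule summable_norm)
  also have "\<dots> = (\<Sum>k. c k * norm w ^ k) - c 0"
    unfolding norm_eq using suminf_split_head[OF summable] by simp
  finally show ?thesis .
qed

section \<open>Limits, fixed points and convexity\<close>

lemma suminf_less_suminf:
  fixes f g :: "nat \<Rightarrow> real"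
  assumes "summable f" and "summable g" and "\<And>n. f n \<le> g n" and "f k < g k"
  shows "suminf f < suminf g"
proof -
  have "0 < (\<Sum>n. g n - f n)"
    using assms by (intro suminf_pos2[where i = k] summable_diff) auto
  then show ?thesis
    using suminf_diff[OF assms(2,1)] by simp
qed

lemma tendsto_funpow_imp_fixpoint:
  fixes f :: "'a::t2_space \<Rightarrow> 'a"
  assumes "isCont f L" and "(\<lambda>n. (f ^^ n) x) \<longlonglongrightarrow> L"
  shows "f L = L"
proof -
  have "(\<lambda>n. f ((f ^^ n) x)) \<longlonglongrightarrow> f L"
    using assms by (rule isCont_tendsto_compose)
  moreover have "(\<lambda>n. f ((f ^^ n) x)) \<longlonglongrightarrow> L"
    using LIMSEQ_Suc[OF assms(2)] by simp
  ultimately show ?thesis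
    by (rule LIMSEQ_unique)
qed

lemma power_diff_as_sum:
  fixes b u :: real
  shows "(u ^ i - b ^ i) * (1 - b) = ((u - b) * (1 - b)) * (\<Sum>j<i. u ^ j * b ^ (i - Suc j))"
    and "(u - b) * (1 - b ^ i) = ((u - b) * (1 - b)) * (\<Sum>j<i. 1 ^ j * b ^ (i - Suc j))"
  using power_diff_sumr2[of u i b] power_diff_sumr2[of 1 i b] by (simp_all add: mult_ac)

lemma power_chord_le:
  fixes b u :: real
  assumes "0 \<le> b" and "b \<le> u" and "u \<le> 1"
  shows "(u ^ i - b ^ i) * (1 - b) \<le> (u - b) * (1 - b ^ i)"
  unfolding power_diff_as_sum using assms order_trans[OF assms(1,2)]
  by (intro mult_left_mono sum_mono mult_right_mono) (auto intro!: power_le_one)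

lemma power_chord_less:
  fixes b u :: real
  assumes "0 \<le> b" and "b < u" and "u < 1" and "2 \<le> i"
  shows "(u ^ i - b ^ i) * (1 - b) < (u - b) * (1 - b ^ i)"
  unfolding power_diff_as_sum
proof (rule mult_strict_left_mono)
  have "u ^ (i - 1) < 1"
    using assms by (subst power_less_one_iff) auto
  then show "(\<Sum>j<i. u ^ j * b ^ (i - Suc j)) < (\<Sum>j<i. 1 ^ j * b ^ (i - Suc j))"
    using assms
    by (intro sum_strict_mono_ex1) (auto intro!: bexI[of _ "i - 1"] mult_left_le_one_le power_le_one)
  show "0 < (u - b) * (1 - b)"
    using assms by simp
qed

lemma convergent_periodic_tail_eq:
  fixes f :: "nat \<Rightarrow> 'a::t2_space"
  assumes "convergent f" and periodic: "\<And>n. N \<le> n \<Longrightarrow> f n = g (n mod d)" and "i < d"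
  shows "g i = g 0"
proof -
  obtain L where L: "f \<longlonglongrightarrow> L"
    using assms(1) by (auto simp: convergent_def)
  have "g i' = L" if "i' < d" for i'
  proof -
    have "strict_mono (\<lambda>k. k * d + i')"
      using that by (intro strict_monoI) simp
    then have "(\<lambda>k. f (k * d + i')) \<longlonglongrightarrow> L"
      using LIMSEQ_subseq_LIMSEQ[OF L] by (simp add: o_def)
    moreover have "f (k * d + i') = g i'" if "N \<le> k" for k
    proof -
      have "k \<le> k * d"
        using \<open>i' < d\<close> by (cases d) auto
      then have "N \<le> k * d + i'"
        using that by linarith
      then have "f (k * d + i') = g ((k * d + i') mod d)"
        by (rule periodic)
      also have "(k * d + i') mod d = i'"
        using \<open>i' < d\<close> by simp
      finally show ?thesis .
    qed
    then have "\<forall>\<^sub>F k in sequentially. f (k * d + i') = g i'"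
      unfolding eventually_sequentially by blast
    then have "(\<lambda>k. f (k * d + i')) \<longlonglongrightarrow> g i'"
      by (rule tendsto_eventually)
    ultimately have "L = g i'"
      by (rule LIMSEQ_unique)
    then show ?thesis
      by simp
  qed
  then show ?thesis
    using assms(3) by simp
qed

section \<open>Iterating a probability generating function\<close>

locale prob_coeffs =
  fixes a :: "nat \<Rightarrow> real"
  assumes coeff_nonneg [simp]: "0 \<le> a i" and coeffs_sums_one: "a sums 1"
begin

lemma summable_coeffs [simp]: "summable a"
  using coeffs_sums_one by (simp add: sums_iff)

lemma suminf_eq_one [simp]: "suminf a = 1"
  using coeffs_sums_one by (simp add: sums_iff)

lemma summable_norm_pgf_terms:
  fixes w :: "'a::{real_normed_field,banach}"
  shows "norm w \<le> 1 \<Longrightarrow> summable (\<lambda>i. norm (of_real (a i) * w ^ i))"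
  by (rule summable_norm_powser_nonneg) auto

lemma pgf_real: "pgf a u = (\<Sum>i. a i * u ^ i)" for u :: real
  by (simp add: pgf_def)

lemma summable_pgf_real: "\<bar>u\<bar> \<le> 1 \<Longrightarrow> summable (\<lambda>i. a i * u ^ i)" for u :: real
  using summable_norm_cancel[OF summable_norm_pgf_terms[of u]] by simp

lemma pgf_real_sums: "\<bar>u\<bar> \<le> 1 \<Longrightarrow> (\<lambda>i. a i * u ^ i) sums pgf a u" for u :: real
  using summable_sums[OF summable_pgf_real[of u]] by (simp add: pgf_real)

lemma pgf_eq_if_constant_on_support:
  fixes w c :: "'a::{real_normed_field,banach}"
  assumes "\<And>i. a i \<noteq> 0 \<Longrightarrow> w ^ i = c"
  shows "pgf a w = c"
proof -
  have "(\<lambda>i. of_real (a i) * w ^ i) = (\<lambda>i. of_real (a i) * c)"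
    using assms by (metis mult_eq_0_iff of_real_eq_0_iff)
  then show ?thesis
    using suminf_of_real[OF summable_coeffs, where 'a = 'a]
      suminf_mult2[OF summable_of_real[OF summable_coeffs], of c]
    by (simp add: pgf_def)
qed

lemma pgf_one [simp]: "pgf a 1 = (1::'a::{real_normed_field,banach})"
  by (rule pgf_eq_if_constant_on_support) simp

lemma iter_nonneg_sums_one: "(\<forall>k. 0 \<le> iter a n k) \<and> iter a n sums 1"
proof (induction n)
  case 0
  show ?case
    using sums_single[of 1 "\<lambda>_. 1::real"] by (simp add: if_distrib cong: if_cong)
next
  case (Suc n)
  then have f: "\<And>k. 0 \<le> iter a n k" "summable (iter a n)" "suminf (iter a n) \<le> 1"
    by (auto simp: sums_iff)
  have "(\<lambda>k. of_real (comp_coeff a (iter a n) k) * (1::real) ^ k)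
      sums pgf a (\<Sum>k. of_real (iter a n k) * (1::real) ^ k)"
    using f by (intro comp_coeff_powser_sums) auto
  then have "comp_coeff a (iter a n) sums 1"
    using Suc by (simp add: sums_iff)
  then show ?case
    using f by (auto intro: comp_coeff_nonneg)
qed

lemma iter_nonneg: "0 \<le> iter a n k"
  using iter_nonneg_sums_one by blast

lemma iter_sums_one: "iter a n sums 1"
  using iter_nonneg_sums_one by blast

lemma iter_powser_sums:
  fixes z :: "'a::{real_normed_field,banach}"
  assumes "norm z \<le> 1"
  shows "(\<lambda>k. of_real (iter a n k) * z ^ k) sums (pgf a ^^ n) z"
proof (induction n)
  case 0
  have "(\<lambda>k. of_real (iter a 0 k) * z ^ k) = (\<lambda>k. if k = 1 then z ^ k else 0)"
    by (rule ext) simp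
  then show ?case
    using sums_single[of 1 "\<lambda>k. z ^ k"] by simp
next
  case (Suc n)
  have "(\<lambda>k. of_real (comp_coeff a (iter a n) k) * z ^ k) sums pgf a (\<Sum>k. of_real (iter a n k) * z ^ k)"
    using assms iter_sums_one iter_nonneg by (intro comp_coeff_powser_sums) (auto simp: sums_iff)
  then show ?case
    using Suc by (simp add: sums_iff)
qed

lemma iter_zero: "iter a n 0 = (pgf a ^^ n) (0::real)"
  using iter_powser_sums[of "0::real" n] powser_zero[of "iter a n"] by (simp add: sums_iff)

lemma pgf_mono: "0 \<le> u \<Longrightarrow> u \<le> v \<Longrightarrow> v \<le> 1 \<Longrightarrow> pgf a u \<le> pgf a (v::real)"
  unfolding pgf_real by (intro suminf_le summable_pgf_real mult_left_mono power_mono) auto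

lemma pgf_nonneg: "0 \<le> u \<Longrightarrow> u \<le> 1 \<Longrightarrow> 0 \<le> pgf a (u::real)"
  unfolding pgf_real by (intro suminf_nonneg summable_pgf_real) auto

lemma pgf_le_one: "0 \<le> u \<Longrightarrow> u \<le> 1 \<Longrightarrow> pgf a u \<le> (1::real)"
  using pgf_mono[of u 1] by simp

lemma funpow_pgf_bounds: "0 \<le> u \<Longrightarrow> u \<le> 1 \<Longrightarrow> 0 \<le> (pgf a ^^ n) u \<and> (pgf a ^^ n) u \<le> (1::real)"
  by (induction n) (auto intro: pgf_nonneg pgf_le_one)

lemma funpow_pgf_mono:
  assumes "0 \<le> u" and "u \<le> v" and "v \<le> 1"
  shows "(pgf a ^^ n) u \<le> (pgf a ^^ n) (v::real)"
proof (induction n)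
  case (Suc n)
  then show ?case
    using funpow_pgf_bounds[of u n] funpow_pgf_bounds[of v n] assms
    by (simp add: pgf_mono)
qed (use assms in simp)

lemma isCont_pgf: "norm w < 1 \<Longrightarrow> isCont (pgf a) (w::'a::{real_normed_field,banach})"
  unfolding pgf_def
  by (rule isCont_powser[where K = 1])
     (use summable_norm_cancel[OF summable_norm_pgf_terms[of "1::'a"]] in auto)

definition extinction :: real where
  "extinction = lim (\<lambda>n. (pgf a ^^ n) 0)"

lemma funpow_pgf_zero_tendsto: "(\<lambda>n. (pgf a ^^ n) 0) \<longlonglongrightarrow> extinction"
  and extinction_nonneg: "0 \<le> extinction"
  and extinction_le_one: "extinction \<le> 1"
proof -
  have "incseq (\<lambda>n. (pgf a ^^ n) (0::real))"
  proof (rule incseq_SucI)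
    show "(pgf a ^^ n) 0 \<le> (pgf a ^^ Suc n) (0::real)" for n
    proof -
      have "(pgf a ^^ n) 0 \<le> (pgf a ^^ n) (pgf a (0::real))"
        using pgf_nonneg[of 0] pgf_le_one[of 0] by (intro funpow_pgf_mono) auto
      also have "\<dots> = (pgf a ^^ Suc n) 0"
        by (simp only: funpow_Suc_right o_def)
      finally show ?thesis .
    qed
  qed
  moreover have "\<forall>n. (pgf a ^^ n) (0::real) \<le> 1"
    using funpow_pgf_bounds[of 0] by simp
  ultimately obtain L where L: "(\<lambda>n. (pgf a ^^ n) 0) \<longlonglongrightarrow> L" "\<forall>n. (pgf a ^^ n) (0::real) \<le> L"
    by (rule incseq_convergent)
  have L_le_one: "L \<le> 1"
    using L(1) by (rule LIMSEQ_le_const2) (use funpow_pgf_bounds[of 0] in auto)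
  have "extinction = L"
    unfolding extinction_def using L(1) by (rule limI)
  then show "(\<lambda>n. (pgf a ^^ n) 0) \<longlonglongrightarrow> extinction" "0 \<le> extinction" "extinction \<le> 1"
    using L(1) L(2)[rule_format, of 0] L_le_one by simp_all
qed

lemma pgf_extinction [simp]: "pgf a extinction = extinction"
proof (cases "extinction = 1")
  case False
  then show ?thesis
    using extinction_nonneg extinction_le_one
    by (intro tendsto_funpow_imp_fixpoint[OF isCont_pgf funpow_pgf_zero_tendsto]) auto
qed simp

lemma funpow_pgf_extinction [simp]: "(pgf a ^^ n) extinction = extinction"
  by (induction n) simp_all

lemma lim_iter_zero: "lim (\<lambda>n. iter a n 0) = extinction"
  by (simp add: iter_zero extinction_def)

text \<open>If only \<open>a 0\<close> and \<open>a 1\<close> were nonzero, the fixed point equation would force \<open>a 0 = 0\<close>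
  and \<open>a 1 = 1\<close>.\<close>
lemma exists_coeff_ge_two:
  assumes "extinction < 1" and "\<And>i. a i < 1"
  shows "\<exists>k\<ge>2. 0 < a k"
proof (rule ccontr)
  assume "\<not> (\<exists>k\<ge>2. 0 < a k)"
  then have "a k = 0" if "2 \<le> k" for k
  proof -
    have "\<not> 0 < a k"
      using \<open>\<not> (\<exists>k\<ge>2. 0 < a k)\<close> that by blast
    then show ?thesis
      using coeff_nonneg[of k] by linarith
  qed
  then have affine: "pgf a u = a 0 + a 1 * u" for u :: real
    unfolding pgf_real by (subst suminf_finite[of "{0, 1}"]) auto
  have sum: "a 0 + a 1 = 1"
    using affine[of 1] by simp
  have fixed: "a 0 + a 1 * extinction = extinction"
    using affine[of extinction] by simp
  have "a 0 * (1 - extinction) = (a 0 + a 1 * extinction - extinction) - extinction * (a 0 + a 1 - 1)"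
    by (simp add: algebra_simps)
  then have "a 0 * (1 - extinction) = 0"
    by (simp only: sum fixed) simp
  then have "a 1 = 1"
    using assms(1) sum by simp
  then show False
    using assms(2)[of 1] by simp
qed

text \<open>Strict convexity: on \<open>(extinction, 1)\<close> the graph of \<open>pgf a\<close> lies strictly below its chord
  from \<open>extinction\<close> to \<open>1\<close>, which is the diagonal.\<close>
lemma pgf_less_self:
  assumes "\<And>i. a i < 1" and "extinction < u" and "u < 1"
  shows "pgf a u < u"
proof -
  define e where "e = extinction"
  have e: "0 \<le> e" "e < u" "pgf a e = e"
    using assms extinction_nonneg by (simp_all add: e_def)
  obtain k where k: "2 \<le> k" "0 < a k"
    using exists_coeff_ge_two assms by fastforce
  have su: "(\<lambda>i. a i * u ^ i) sums pgf a u" and se: "(\<lambda>i. a i * e ^ i) sums e"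
    using pgf_real_sums[of u] pgf_real_sums[of e] e assms by simp_all
  have "(\<lambda>i. (a i * u ^ i - a i * e ^ i) * (1 - e)) sums ((pgf a u - e) * (1 - e))"
    by (intro sums_mult2 sums_diff su se)
  then have lhs: "(\<lambda>i. a i * ((u ^ i - e ^ i) * (1 - e))) sums ((pgf a u - e) * (1 - e))"
    by (simp add: algebra_simps)
  have "(\<lambda>i. (a i - a i * e ^ i) * (u - e)) sums ((1 - e) * (u - e))"
    by (intro sums_mult2 sums_diff coeffs_sums_one se)
  then have rhs: "(\<lambda>i. a i * ((u - e) * (1 - e ^ i))) sums ((u - e) * (1 - e))"
    by (simp add: algebra_simps)
  have "(\<Sum>i. a i * ((u ^ i - e ^ i) * (1 - e))) < (\<Sum>i. a i * ((u - e) * (1 - e ^ i)))"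
  proof (rule suminf_less_suminf[where k = k])
    show "summable (\<lambda>i. a i * ((u ^ i - e ^ i) * (1 - e)))"
      using lhs by (rule sums_summable)
    show "summable (\<lambda>i. a i * ((u - e) * (1 - e ^ i)))"
      using rhs by (rule sums_summable)
    show "a i * ((u ^ i - e ^ i) * (1 - e)) \<le> a i * ((u - e) * (1 - e ^ i))" for i
      using power_chord_le[of e u i] e assms by (intro mult_left_mono) auto
    show "a k * ((u ^ k - e ^ k) * (1 - e)) < a k * ((u - e) * (1 - e ^ k))"
      using power_chord_less[of e u k] e assms k by (intro mult_strict_left_mono) auto
  qed
  then have "(pgf a u - e) * (1 - e) < (u - e) * (1 - e)"
    using lhs rhs by (simp add: sums_iff)
  then show ?thesis
    using e assms by (simp add: mult_less_cancel_right)
qed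

lemma funpow_pgf_tendsto_extinction_above:
  assumes lt: "\<And>i. a i < 1" and u: "extinction < u" "u < 1"
  shows "(\<lambda>n. (pgf a ^^ n) u) \<longlonglongrightarrow> extinction"
proof -
  define y where "y n = (pgf a ^^ n) u" for n
  have y_Suc: "y (Suc n) = pgf a (y n)" for n
    by (simp add: y_def)
  have below_diagonal: "pgf a v \<le> v" if "extinction \<le> v" "v \<le> u" for v
    using pgf_less_self[OF lt, of v] that u by (cases "v = extinction") auto
  have y_bounds: "extinction \<le> y n \<and> y n \<le> u" for n
  proof (induction n)
    case (Suc n)
    have "extinction \<le> y (Suc n)"
      using pgf_mono[of extinction "y n"] Suc extinction_nonneg u by (simp add: y_Suc)
    moreover have "y (Suc n) \<le> y n"
      using below_diagonal Suc by (simp add: y_Suc)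
    ultimately show ?case
      using Suc by simp
  qed (use u in \<open>simp add: y_def\<close>)
  have "decseq y"
    using below_diagonal y_bounds by (intro decseq_SucI) (simp add: y_Suc)
  moreover have "\<forall>n. extinction \<le> y n"
    using y_bounds by blast
  ultimately obtain L where L: "y \<longlonglongrightarrow> L" "\<forall>n. L \<le> y n"
    by (rule decseq_convergent)
  have L_bounds: "extinction \<le> L" "L \<le> u"
    using LIMSEQ_le_const[OF L(1), of extinction] y_bounds L(2)[rule_format, of 0]
    by (auto simp: y_def)
  have "pgf a L = L"
    using L(1) L_bounds extinction_nonneg u unfolding y_def
    by (intro tendsto_funpow_imp_fixpoint[OF isCont_pgf]) auto
  then have "L = extinction"
    using pgf_less_self[OF lt, of L] L_bounds u by fastforce
  then show ?thesis
    using L(1) by (simp add: y_def[abs_def])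
qed

lemma funpow_pgf_tendsto_extinction_real:
  assumes "\<And>i. a i < 1" and "0 \<le> u" and "u < 1"
  shows "(\<lambda>n. (pgf a ^^ n) u) \<longlonglongrightarrow> extinction"
proof (cases "u \<le> extinction")
  case True
  have bounds: "(pgf a ^^ n) 0 \<le> (pgf a ^^ n) u \<and> (pgf a ^^ n) u \<le> extinction" for n
    using funpow_pgf_mono[of 0 u n] funpow_pgf_mono[of u extinction n] True assms extinction_le_one
    by auto
  show ?thesis
    by (rule tendsto_sandwich[OF _ _ funpow_pgf_zero_tendsto tendsto_const]) (use bounds in auto)
next
  case False
  then show ?thesis
    using assms by (intro funpow_pgf_tendsto_extinction_above) auto
qed

text \<open>Since \<open>pgf a ^^ n\<close> has nonnegative coefficients,
  \<open>|P\<^sup>n w - P\<^sup>n 0| \<le> P\<^sup>n |w| - P\<^sup>n 0\<close>, and both real orbits tend to \<open>extinction\<close>.\<close>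
lemma funpow_pgf_tendsto_extinction:
  fixes w :: "'a::{real_normed_field,banach}"
  assumes "\<And>i. a i < 1" and "norm w < 1"
  shows "(\<lambda>n. (pgf a ^^ n) w) \<longlonglongrightarrow> of_real extinction"
proof -
  have dist_bound:
    "norm ((pgf a ^^ n) w - of_real ((pgf a ^^ n) 0)) \<le> (pgf a ^^ n) (norm w) - (pgf a ^^ n) 0" for n
  proof -
    have "(\<lambda>k. iter a n k * norm w ^ k) sums (pgf a ^^ n) (norm w)"
      using iter_powser_sums[of "norm w" n] assms by simp
    then have "norm ((\<Sum>k. of_real (iter a n k) * w ^ k) - of_real (iter a n 0))
        \<le> (pgf a ^^ n) (norm w) - iter a n 0"
      using norm_powser_sub_head_le[of "iter a n" w] iter_nonneg by (simp add: sums_iff)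
    moreover have "(\<Sum>k. of_real (iter a n k) * w ^ k) = (pgf a ^^ n) w"
      using iter_powser_sums[of w n] assms by (simp add: sums_iff)
    ultimately show ?thesis
      by (simp add: iter_zero)
  qed
  have "(\<lambda>n. (pgf a ^^ n) (norm w) - (pgf a ^^ n) 0) \<longlonglongrightarrow> extinction - extinction"
    using assms by (intro tendsto_diff funpow_pgf_tendsto_extinction_real funpow_pgf_zero_tendsto) auto
  then have "(\<lambda>n. (pgf a ^^ n) (norm w) - (pgf a ^^ n) 0) \<longlonglongrightarrow> 0"
    by simp
  with dist_bound have "(\<lambda>n. (pgf a ^^ n) w - of_real ((pgf a ^^ n) 0)) \<longlonglongrightarrow> 0"
    by (rule Lim_null_comparison[OF always_eventually[OF allI]])
  from tendsto_add[OF this tendsto_of_real[OF funpow_pgf_zero_tendsto]]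
  show ?thesis
    by simp
qed

lemma sums_Re_pgf:
  fixes \<zeta> c :: complex
  assumes "norm \<zeta> \<le> 1"
  shows "(\<lambda>k. a k * Re (c * \<zeta> ^ k)) sums Re (c * pgf a \<zeta>)"
proof -
  have "(\<lambda>k. c * (of_real (a k) * \<zeta> ^ k)) sums (c * pgf a \<zeta>)"
    unfolding pgf_def using summable_norm_cancel[OF summable_norm_pgf_terms[OF assms]]
    by (simp add: sums_mult summable_sums)
  then have "(\<lambda>k. Re (c * (of_real (a k) * \<zeta> ^ k))) sums Re (c * pgf a \<zeta>)"
    by (rule sums_Re)
  moreover have "Re (c * (of_real (a k) * \<zeta> ^ k)) = a k * Re (c * \<zeta> ^ k)" for k
    by (simp add: algebra_simps)
  ultimately show ?thesis
    by simp
qed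

text \<open>With \<open>S = pgf a \<zeta>\<close>: \<open>Re (cnj S * \<zeta>\<^sup>k) \<le> |S|\<close> for every \<open>k\<close>, strictly for \<open>k = i\<close> or
  \<open>k = j\<close>, and averaging with the weights \<open>a k\<close> gives \<open>|S|\<^sup>2 < |S|\<close>.\<close>
lemma norm_pgf_less_one:
  fixes \<zeta> :: complex
  assumes "norm \<zeta> = 1" and "0 < a i" and "0 < a j" and "\<zeta> ^ i \<noteq> \<zeta> ^ j"
  shows "norm (pgf a \<zeta>) < 1"
proof (cases "pgf a \<zeta> = 0")
  case False
  define S where "S = pgf a \<zeta>"
  have norm_eq: "norm (cnj S * \<zeta> ^ k) = norm S" for k
    using assms(1) by (simp add: norm_mult norm_power)
  have Re_S: "Re (cnj S * S) = norm S ^ 2"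
    by (simp add: cmod_power2) (simp add: power2_eq_square)
  have "(\<lambda>k. a k * Re (cnj S * \<zeta> ^ k)) sums Re (cnj S * S)"
    unfolding S_def using assms(1) by (intro sums_Re_pgf) simp
  then have re_sums: "(\<lambda>k. a k * Re (cnj S * \<zeta> ^ k)) sums (norm S ^ 2)"
    unfolding Re_S .
  have "Re (cnj S * \<zeta> ^ i) < norm S \<or> Re (cnj S * \<zeta> ^ j) < norm S"
  proof (rule ccontr)
    assume "\<not> ?thesis"
    then have "norm (cnj S * \<zeta> ^ k) = Re (cnj S * \<zeta> ^ k)" if "k = i \<or> k = j" for k
      using that complex_Re_le_cmod[of "cnj S * \<zeta> ^ k"] norm_eq[of k] by auto
    then have "Im (cnj S * \<zeta> ^ k) = 0 \<and> Re (cnj S * \<zeta> ^ k) = norm S" if "k = i \<or> k = j" for k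
      using that norm_eq[of k] norm_eq_Re_iff complex_nonneg_Reals_iff by metis
    then have "cnj S * \<zeta> ^ i = cnj S * \<zeta> ^ j"
      by (metis complex_eq_iff)
    then show False
      using False assms(4) by (simp add: S_def)
  qed
  then obtain k where k: "0 < a k" "Re (cnj S * \<zeta> ^ k) < norm S"
    using assms(2,3) by blast
  have "norm S ^ 2 < norm S"
  proof -
    have "(\<Sum>k. a k * Re (cnj S * \<zeta> ^ k)) < (\<Sum>k. a k * norm S)"
    proof (rule suminf_less_suminf[where k = k])
      show "summable (\<lambda>k. a k * Re (cnj S * \<zeta> ^ k))"
        using re_sums by (rule sums_summable)
      show "summable (\<lambda>k. a k * norm S)"
        by (intro summable_mult2 summable_coeffs)
      show "a n * Re (cnj S * \<zeta> ^ n) \<le> a n * norm S" for n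
        using complex_Re_le_cmod[of "cnj S * \<zeta> ^ n"] norm_eq[of n] by (simp add: mult_left_mono)
      show "a k * Re (cnj S * \<zeta> ^ k) < a k * norm S"
        using k by simp
    qed
    then show ?thesis
      using re_sums suminf_mult2[OF summable_coeffs, of "norm S"] by (simp add: sums_iff)
  qed
  show ?thesis
  proof (rule ccontr)
    assume "\<not> norm (pgf a \<zeta>) < 1"
    then have "norm S * 1 \<le> norm S * norm S"
      by (intro mult_left_mono) (auto simp: S_def)
    with \<open>norm S ^ 2 < norm S\<close> show False
      by (simp add: power2_eq_square)
  qed
qed simp

lemma funpow_pgf_unit_tendsto_extinction:
  fixes \<zeta> :: complex
  assumes "\<And>i. a i < 1" and "norm \<zeta> = 1" and "0 < a i" and "0 < a j" and "\<zeta> ^ i \<noteq> \<zeta> ^ j"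
  shows "(\<lambda>n. (pgf a ^^ n) \<zeta>) \<longlonglongrightarrow> of_real extinction"
proof (rule LIMSEQ_imp_Suc)
  have "(\<lambda>n. (pgf a ^^ n) (pgf a \<zeta>)) \<longlonglongrightarrow> of_real extinction"
    using assms by (intro funpow_pgf_tendsto_extinction norm_pgf_less_one) auto
  then show "(\<lambda>n. (pgf a ^^ Suc n) \<zeta>) \<longlonglongrightarrow> of_real extinction"
    by (simp only: funpow_Suc_right o_def)
qed

lemma funpow_pgf_power:
  fixes w :: "'a::{real_normed_field,banach}"
  assumes "\<And>i. a i \<noteq> 0 \<Longrightarrow> w ^ i = w ^ r"
  shows "(pgf a ^^ n) w = w ^ (r ^ n)"
proof (induction n)
  case (Suc n)
  have "(w ^ (r ^ n)) ^ i = (w ^ (r ^ n)) ^ r" if "a i \<noteq> 0" for i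
    using assms[OF that] by (simp flip: power_mult) (simp add: power_mult mult.commute)
  then have "pgf a (w ^ (r ^ n)) = (w ^ (r ^ n)) ^ r"
    by (rule pgf_eq_if_constant_on_support)
  moreover have "w ^ (r ^ Suc n) = (w ^ (r ^ n)) ^ r"
    by (simp add: power_mult[symmetric] mult.commute)
  ultimately show ?case
    using Suc by simp
qed simp

end

section \<open>Characters and Fourier transform on \<open>C\<^sub>m\<close>\<close>

text \<open>The characters of \<open>C\<^sub>m\<close> are \<open>x \<mapsto> root_unity m (j * x)\<close> for \<open>j \<in> {0..<m}\<close>.\<close>
definition root_unity :: "nat \<Rightarrow> int \<Rightarrow> complex" where
  "root_unity m x = cis (2 * pi * of_int x / of_nat m)"

lemma root_unity_add: "root_unity m (x + y) = root_unity m x * root_unity m y"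
  by (simp add: root_unity_def cis_mult add_divide_distrib distrib_left)

lemma root_unity_0 [simp]: "root_unity m 0 = 1"
  by (simp add: root_unity_def)

lemma norm_root_unity [simp]: "norm (root_unity m x) = 1"
  by (simp add: root_unity_def)

lemma root_unity_power: "root_unity m x ^ n = root_unity m (int n * x)"
  by (induction n) (simp_all add: root_unity_add distrib_right)

lemma root_unity_eq_1_iff:
  assumes "0 < m"
  shows "root_unity m x = 1 \<longleftrightarrow> int m dvd x"
proof -
  have "root_unity m x = exp (\<i> * complex_of_real (2 * pi * of_int x / of_nat m))"
    by (simp add: root_unity_def cis_conv_exp)
  then have "root_unity m x = 1 \<longleftrightarrow> (\<exists>n::int. 2 * pi * of_int x / of_nat m = of_int (2 * n) * pi)"
    by (simp add: exp_eq_1)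
  also have "\<dots> \<longleftrightarrow> (\<exists>n::int. of_int x = of_nat m * (of_int n :: real))"
    using assms by (auto simp: field_simps)
  also have "\<dots> \<longleftrightarrow> (\<exists>n::int. x = int m * n)"
    by (metis of_int_eq_iff of_int_mult of_int_of_nat_eq)
  finally show ?thesis
    by (auto simp: dvd_def)
qed

lemma root_unity_minus_eq_1: "root_unity m x = 1 \<Longrightarrow> root_unity m (- x) = 1"
  using root_unity_add[of m x "- x"] by simp

lemma root_unity_mod:
  assumes "0 < m"
  shows "root_unity m (x mod int m) = root_unity m x"
proof -
  have "root_unity m (int m * (x div int m)) = 1"
    using assms by (simp add: root_unity_eq_1_iff)
  then show ?thesis
    using root_unity_add[of m "x mod int m" "int m * (x div int m)"] by simp
qed

lemma root_unity_mult_mod: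
  assumes "0 < m"
  shows "root_unity m (j * (x mod int m)) = root_unity m (j * x)"
  by (metis assms mod_mult_right_eq root_unity_mod)

lemma sum_root_unity_orthogonal:
  assumes m: "0 < m" and l: "l \<in> {0..<int m}" and l': "l' \<in> {0..<int m}"
  shows "(\<Sum>j\<in>{0..<int m}. root_unity m (j * (l' - l))) = (if l' = l then of_nat m else 0)"
proof -
  have "{0..<int m} = int ` {..<m}"
    by (simp add: image_int_atLeastLessThan flip: atLeast0LessThan)
  then have "(\<Sum>j\<in>{0..<int m}. root_unity m (j * (l' - l))) = (\<Sum>j<m. root_unity m (l' - l) ^ j)"
    by (simp add: root_unity_power sum.reindex)
  also have "\<dots> = (if l' = l then of_nat m else 0)"
  proof (cases "l' = l")
    case False
    have "\<not> int m dvd (l' - l)"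
      using dvd_imp_le_int[of "l' - l" "int m"] l l' False by auto
    then have "root_unity m (l' - l) \<noteq> 1"
      using m by (simp add: root_unity_eq_1_iff)
    moreover have "root_unity m (l' - l) ^ m = 1"
      using m by (simp add: root_unity_power root_unity_eq_1_iff)
    ultimately show ?thesis
      using geometric_sum[of "root_unity m (l' - l)" m] False by simp
  qed simp
  finally show ?thesis .
qed

lemma sum_shift_mod:
  "(\<Sum>l\<in>{0..<int m}. f ((l - s) mod int m)) = (\<Sum>l\<in>{0..<int m}. f l)"
proof (rule sum.reindex_bij_witness[where i = "\<lambda>l. (l + s) mod int m" and j = "\<lambda>l. (l - s) mod int m"])
  fix l assume l: "l \<in> {0..<int m}"
  show "((l - s) mod int m + s) mod int m = l" "((l + s) mod int m - s) mod int m = l"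
    using l by (simp_all add: mod_add_left_eq mod_diff_left_eq)
  show "(l - s) mod int m \<in> {0..<int m}" "(l + s) mod int m \<in> {0..<int m}"
    using l by simp_all
qed (rule refl)

definition fourier :: "nat \<Rightarrow> (int \<Rightarrow> real) \<Rightarrow> int \<Rightarrow> complex" where
  "fourier m x j = (\<Sum>l\<in>{0..<int m}. of_real (x l) * root_unity m (j * l))"

lemma fourier_add: "fourier m (\<lambda>l. x l + y l) j = fourier m x j + fourier m y j"
  by (simp add: fourier_def sum.distrib distrib_right)

lemma fourier_diff: "fourier m (\<lambda>l. x l - y l) j = fourier m x j - fourier m y j"
  by (simp add: fourier_def sum_subtractf left_diff_distrib)

lemma fourier_scale: "fourier m (\<lambda>l. c * x l) j = of_real c * fourier m x j"
  by (simp add: fourier_def sum_distrib_left mult.assoc)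

lemma fourier_gr_basis:
  assumes "0 < m"
  shows "fourier m (gr_basis m g) j = root_unity m (j * g)"
proof -
  have "fourier m (gr_basis m g) j = (\<Sum>l\<in>{0..<int m}. if l = g mod int m then root_unity m (j * l) else 0)"
    unfolding fourier_def gr_basis_def by (rule sum.cong) auto
  also have "\<dots> = root_unity m (j * (g mod int m))"
    using assms by (simp add: sum.delta')
  finally show ?thesis
    using assms by (simp add: root_unity_mult_mod)
qed

lemma fourier_gr_sum:
  assumes "0 < m"
  shows "fourier m (gr_sum m S) j = (\<Sum>g\<in>S. root_unity m (j * g))"
proof -
  have "fourier m (gr_sum m S) j = (\<Sum>g\<in>S. fourier m (gr_basis m g) j)"
    unfolding gr_sum_def fourier_def of_real_sum sum_distrib_right by (rule sum.swap)
  then show ?thesis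
    using fourier_gr_basis[OF assms] by simp
qed

lemma fourier_gr_mult:
  assumes m: "0 < m"
  shows "fourier m (gr_mult m x y) j = fourier m x j * fourier m y j"
proof -
  let ?I = "{0..<int m}"
  have shift: "(\<Sum>l\<in>?I. of_real (y ((l - i) mod int m)) * root_unity m (j * l))
      = root_unity m (j * i) * fourier m y j" for i
  proof -
    have split: "root_unity m (j * l) = root_unity m (j * i) * root_unity m (j * ((l - i) mod int m))" for l
      using root_unity_add[of m "j * i" "j * (l - i)"]
      by (simp add: root_unity_mult_mod[OF m] algebra_simps)
    have factor: "of_real (y ((l - i) mod int m)) * root_unity m (j * l)
        = root_unity m (j * i)
          * (of_real (y ((l - i) mod int m)) * root_unity m (j * ((l - i) mod int m)))" for l
      unfolding split[of l] by (rule mult.left_commute)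
    have "(\<Sum>l\<in>?I. of_real (y ((l - i) mod int m)) * root_unity m (j * l))
        = root_unity m (j * i)
          * (\<Sum>l\<in>?I. of_real (y ((l - i) mod int m)) * root_unity m (j * ((l - i) mod int m)))"
      unfolding factor by (rule sum_distrib_left[symmetric])
    also have "\<dots> = root_unity m (j * i) * fourier m y j"
      using sum_shift_mod[of "\<lambda>t. of_real (y t) * root_unity m (j * t)" i m] by (simp add: fourier_def)
    finally show ?thesis .
  qed
  have "fourier m (gr_mult m x y) j
      = (\<Sum>l\<in>?I. \<Sum>i\<in>?I. of_real (x i) * (of_real (y ((l - i) mod int m)) * root_unity m (j * l)))"
    unfolding fourier_def gr_mult_def by (rule sum.cong) (auto simp: sum_distrib_right mult.assoc)
  also have "\<dots>
      = (\<Sum>i\<in>?I. of_real (x i) * (\<Sum>l\<in>?I. of_real (y ((l - i) mod int m)) * root_unity m (j * l)))"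
    unfolding sum_distrib_left by (rule sum.swap)
  also have "\<dots> = (\<Sum>i\<in>?I. of_real (x i) * root_unity m (j * i)) * fourier m y j"
    unfolding shift sum_distrib_right by (simp only: mult.assoc)
  finally show ?thesis
    by (simp only: fourier_def)
qed

lemma fourier_inversion:
  assumes m: "0 < m" and l: "l \<in> {0..<int m}"
  shows "(\<Sum>j\<in>{0..<int m}. fourier m x j * root_unity m (- (j * l))) = of_nat m * of_real (x l)"
proof -
  have "(\<Sum>j\<in>{0..<int m}. fourier m x j * root_unity m (- (j * l)))
      = (\<Sum>l'\<in>{0..<int m}. of_real (x l') * (\<Sum>j\<in>{0..<int m}. root_unity m (j * (l' - l))))"
    unfolding fourier_def sum_distrib_right sum_distrib_left
    by (subst sum.swap) (simp add: mult.assoc right_diff_distrib flip: root_unity_add)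
  also have "\<dots> = of_nat m * of_real (x l)"
    using l by (simp add: sum_root_unity_orthogonal[OF m l] if_distrib[of "\<lambda>t. _ * t"] sum.delta
        cong: if_cong)
  finally show ?thesis .
qed

lemma tendsto_fourier:
  assumes "\<And>l. (\<lambda>n. v n l) \<longlonglongrightarrow> L l"
  shows "(\<lambda>n. fourier m (v n) j) \<longlonglongrightarrow> fourier m L j"
  unfolding fourier_def by (intro tendsto_intros assms)

lemma tendsto_of_tendsto_fourier:
  assumes m: "0 < m" and lim: "\<And>j. (\<lambda>n. fourier m (v n) j) \<longlonglongrightarrow> fourier m L j"
    and l: "l \<in> {0..<int m}"
  shows "(\<lambda>n. v n l) \<longlonglongrightarrow> L l"
proof -
  have eq: "of_real (x l) = (\<Sum>j\<in>{0..<int m}. fourier m x j * root_unity m (- (j * l))) / of_nat m" for x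
    using fourier_inversion[OF m l, of x] m by simp
  have "(\<lambda>n. (\<Sum>j\<in>{0..<int m}. fourier m (v n) j * root_unity m (- (j * l))) / of_nat m)
      \<longlonglongrightarrow> (\<Sum>j\<in>{0..<int m}. fourier m L j * root_unity m (- (j * l))) / of_nat m"
    by (intro tendsto_divide tendsto_sum tendsto_mult lim tendsto_const) (use m in simp)
  then have "(\<lambda>n. of_real (v n l) :: complex) \<longlonglongrightarrow> of_real (L l)"
    by (simp only: eq)
  then show ?thesis
    by (simp add: tendsto_of_real_iff)
qed

lemma fourier_ev_Cm_sums:
  assumes m: "0 < m" and nonneg: "\<And>k. 0 \<le> b k" and summable: "summable b"
  shows "(\<lambda>k. of_real (b k) * root_unity m j ^ k) sums fourier m (ev_Cm m b) j"
proof -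
  define c where "c l k = (if int k mod int m = l then b k else 0)" for l k
  have c_summable: "summable (c l)" for l
    using summable by (rule summable_comparison_test') (use nonneg in \<open>simp add: c_def\<close>)
  have "of_real (b k) * root_unity m j ^ k = (\<Sum>l\<in>{0..<int m}. of_real (c l k) * root_unity m (j * l))" for k
  proof -
    have "(\<Sum>l\<in>{0..<int m}. of_real (c l k) * root_unity m (j * l))
        = (\<Sum>l\<in>{0..<int m}. if int k mod int m = l then of_real (b k) * root_unity m (j * l) else 0)"
      by (rule sum.cong) (auto simp: c_def)
    also have "\<dots> = of_real (b k) * root_unity m (j * (int k mod int m))"
      using m by (simp add: sum.delta)
    finally
    show ?thesis
      using m by (simp add: root_unity_mult_mod root_unity_power mult.commute)
  qed
  moreover have "(\<lambda>k. \<Sum>l\<in>{0..<int m}. of_real (c l k) * root_unity m (j * l))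
      sums (\<Sum>l\<in>{0..<int m}. of_real (suminf (c l)) * root_unity m (j * l))"
    by (intro sums_sum sums_mult2 sums_of_real summable_sums c_summable)
  moreover have "(\<Sum>l\<in>{0..<int m}. of_real (suminf (c l)) * root_unity m (j * l)) = fourier m (ev_Cm m b) j"
    unfolding fourier_def ev_Cm_def c_def by (rule sum.cong) auto
  ultimately show ?thesis
    by simp
qed

section \<open>Subgroups of \<open>C\<^sub>m\<close>\<close>

lemma root_unity_eq_1_on_generate:
  assumes m: "0 < m" and S: "S \<subseteq> carrier (integer_mod_group m)"
    and gens: "\<And>s. s \<in> S \<Longrightarrow> root_unity m (j * s) = 1"
    and g: "g \<in> generate (integer_mod_group m) S"
  shows "root_unity m (j * g) = 1"
  using g
proof (induction rule: generate.induct)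
  case (inv h)
  then have "h \<in> carrier (integer_mod_group m)"
    using S by blast
  then show ?case
    using gens[OF inv] m by (simp add: root_unity_mult_mod root_unity_minus_eq_1)
next
  case (eng h1 h2)
  then show ?case
    using m by (simp add: root_unity_mult_mod distrib_left root_unity_add)
qed (simp_all add: gens)

lemma subgroup_integer_mod_group_subset:
  "0 < m \<Longrightarrow> subgroup H (integer_mod_group m) \<Longrightarrow> H \<subseteq> {0..<int m}"
  using subgroup.subset by (fastforce simp: carrier_integer_mod_group)

lemma finite_subgroup_integer_mod_group:
  "0 < m \<Longrightarrow> subgroup H (integer_mod_group m) \<Longrightarrow> finite H"
  using subgroup_integer_mod_group_subset finite_subset by blast

lemma zero_mem_subgroup_integer_mod_group:
  "subgroup H (integer_mod_group m) \<Longrightarrow> 0 \<in> H"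
  using subgroup.one_closed by fastforce

lemma sum_root_unity_subgroup:
  assumes m: "0 < m" and H: "subgroup H (integer_mod_group m)"
  shows "(\<Sum>g\<in>H. root_unity m (j * g))
    = (if \<forall>g\<in>H. root_unity m (j * g) = 1 then of_nat (card H) else 0)"
proof (cases "\<forall>g\<in>H. root_unity m (j * g) = 1")
  case True
  then show ?thesis
    by simp
next
  case False
  then obtain h where h: "h \<in> H" "root_unity m (j * h) \<noteq> 1"
    by blast
  have H_sub: "H \<subseteq> {0..<int m}"
    using m H by (rule subgroup_integer_mod_group_subset)
  have closed: "(g + h) mod int m \<in> H" "(g - h) mod int m \<in> H" if "g \<in> H" for g
  proof -
    show "(g + h) mod int m \<in> H"
      using subgroup.m_closed[OF H that h(1)] by simp
    have "inv\<^bsub>integer_mod_group m\<^esub> h = (- h) mod int m"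
      using H_sub h(1) m by (auto simp: carrier_integer_mod_group)
    then show "(g - h) mod int m \<in> H"
      using subgroup.m_closed[OF H that subgroup.m_inv_closed[OF H h(1)]] by (simp add: mod_add_right_eq)
  qed
  have "(\<Sum>g\<in>H. root_unity m (j * g)) = (\<Sum>g\<in>H. root_unity m (j * ((g + h) mod int m)))"
    by (rule sum.reindex_bij_witness[where i = "\<lambda>g. (g + h) mod int m" and j = "\<lambda>g. (g - h) mod int m"])
       (use closed H_sub in \<open>auto simp: mod_add_left_eq mod_diff_left_eq\<close>)
  also have "\<dots> = (\<Sum>g\<in>H. root_unity m (j * g)) * root_unity m (j * h)"
    using m by (simp add: root_unity_mult_mod distrib_left root_unity_add sum_distrib_right)
  finally have "(\<Sum>g\<in>H. root_unity m (j * g)) * (1 - root_unity m (j * h)) = 0"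
    by (simp add: right_diff_distrib)
  then show ?thesis
    unfolding if_not_P[OF False] using h by simp
qed

text \<open>A subgroup of \<open>C\<^sub>m\<close> is the common kernel of the characters trivial on it: the sum of
  \<open>root_unity m (j * (g - x))\<close> over \<open>j \<in> {0..<m}\<close> and \<open>g \<in> H\<close> is \<open>m\<close> if \<open>x \<in> H\<close> and \<open>0\<close>
  otherwise, while summing over \<open>g\<close> first leaves a positive multiple of \<open>card H\<close>.\<close>
lemma mem_subgroupI_characters:
  assumes m: "0 < m" and H: "subgroup H (integer_mod_group m)" and x: "x \<in> {0..<int m}"
    and chars: "\<And>j. \<forall>g\<in>H. root_unity m (j * g) = 1 \<Longrightarrow> root_unity m (j * x) = 1"
  shows "x \<in> H"
proof -
  let ?I = "{0..<int m}" and ?triv = "\<lambda>j. \<forall>g\<in>H. root_unity m (j * g) = 1"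
  have H_sub: "H \<subseteq> ?I" and fin: "finite H" and zero: "0 \<in> H"
    using m H subgroup_integer_mod_group_subset finite_subgroup_integer_mod_group
      zero_mem_subgroup_integer_mod_group by auto
  have "(\<Sum>j\<in>?I. \<Sum>g\<in>H. root_unity m (j * (g - x))) = (\<Sum>g\<in>H. \<Sum>j\<in>?I. root_unity m (j * (g - x)))"
    by (rule sum.swap)
  also have "\<dots> = (\<Sum>g\<in>H. if g = x then of_nat m else 0)"
    using H_sub by (intro sum.cong) (auto simp: sum_root_unity_orthogonal[OF m x])
  also have "\<dots> = (if x \<in> H then of_nat m else 0)"
    using fin by (simp add: sum.delta)
  finally have count:
    "(\<Sum>j\<in>?I. \<Sum>g\<in>H. root_unity m (j * (g - x))) = (if x \<in> H then of_nat m else 0)" .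
  have "(\<Sum>g\<in>H. root_unity m (j * (g - x))) = of_nat (if ?triv j then card H else 0)" for j
  proof -
    have "(\<Sum>g\<in>H. root_unity m (j * (g - x))) = (\<Sum>g\<in>H. root_unity m (j * g)) * root_unity m (- (j * x))"
      by (simp add: sum_distrib_right right_diff_distrib flip: root_unity_add)
    then show ?thesis
      using sum_root_unity_subgroup[OF m H, of j] chars[of j] root_unity_minus_eq_1 by auto
  qed
  then have "(\<Sum>j\<in>?I. \<Sum>g\<in>H. root_unity m (j * (g - x)))
      = of_nat (\<Sum>j\<in>?I. if ?triv j then card H else 0)"
    by (simp add: of_nat_sum)
  with count have
    "(if x \<in> H then of_nat m else 0) = (of_nat (\<Sum>j\<in>?I. if ?triv j then card H else 0) :: complex)"
    by simp
  moreover have "0 < (\<Sum>j\<in>?I. if ?triv j then card H else 0)"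
    using m fin zero by (intro sum_pos2[where i = 0]) (auto simp: card_gt_0_iff)
  ultimately show ?thesis
    by (cases "x \<in> H") (simp_all del: of_nat_sum)
qed

lemma coset_Cm_eq_if_mem:
  assumes "0 < m" and "subgroup H (integer_mod_group m)" and "x \<in> {0..<int m}"
    and "y \<in> coset_Cm m x H"
  shows "coset_Cm m x H = coset_Cm m y H"
  using assms unfolding coset_Cm_def
  by (intro group.l_repr_independence[OF group_integer_mod_group]) (auto simp: carrier_integer_mod_group)

lemma coset_Cm_eq_iff_characters:
  assumes m: "0 < m" and H: "subgroup H (integer_mod_group m)"
    and x: "x \<in> {0..<int m}" and y: "y \<in> {0..<int m}"
  shows "coset_Cm m x H = coset_Cm m y H
    \<longleftrightarrow> (\<forall>j. (\<forall>g\<in>H. root_unity m (j * g) = 1) \<longrightarrow> root_unity m (j * x) = root_unity m (j * y))"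
proof
  assume eq: "coset_Cm m x H = coset_Cm m y H"
  have "y \<in> coset_Cm m y H"
    using y zero_mem_subgroup_integer_mod_group[OF H] by (force simp: coset_Cm_def l_coset_def)
  then obtain h where "h \<in> H" "y = (x + h) mod int m"
    unfolding eq[symmetric] by (auto simp: coset_Cm_def l_coset_def)
  then show "\<forall>j. (\<forall>g\<in>H. root_unity m (j * g) = 1) \<longrightarrow> root_unity m (j * x) = root_unity m (j * y)"
    using m by (auto simp: root_unity_mult_mod distrib_left root_unity_add)
next
  assume chars: "\<forall>j. (\<forall>g\<in>H. root_unity m (j * g) = 1) \<longrightarrow> root_unity m (j * x) = root_unity m (j * y)"
  have "(y - x) mod int m \<in> H"
  proof (rule mem_subgroupI_characters[OF m H])
    show "(y - x) mod int m \<in> {0..<int m}"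
      using m by simp
    fix j
    assume "\<forall>g\<in>H. root_unity m (j * g) = 1"
    then have "root_unity m (j * y) = root_unity m (j * x)"
      using chars by simp
    then show "root_unity m (j * ((y - x) mod int m)) = 1"
      using root_unity_add[of m "j * y" "- (j * x)"] root_unity_add[of m "j * x" "- (j * x)"]
      by (simp add: root_unity_mult_mod[OF m] right_diff_distrib)
  qed
  moreover have "y = (x + (y - x) mod int m) mod int m"
    using y by (simp add: mod_add_right_eq)
  ultimately have "y \<in> coset_Cm m x H"
    by (auto simp: coset_Cm_def l_coset_def)
  then show "coset_Cm m x H = coset_Cm m y H"
    by (rule coset_Cm_eq_if_mem[OF m H x])
qed

lemma subgroup_G_p0: "0 < m \<Longrightarrow> subgroup (G_p0 m a r) (integer_mod_group m)"
  unfolding G_p0_def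
  by (rule group.generate_is_subgroup[OF group_integer_mod_group]) (auto simp: carrier_integer_mod_group)

lemma G_p0_characters_iff:
  assumes m: "0 < m"
  shows "(\<forall>g\<in>G_p0 m a r. root_unity m (j * g) = 1) \<longleftrightarrow> (\<forall>q. a (r + q) \<noteq> 0 \<longrightarrow> root_unity m j ^ q = 1)"
proof
  assume triv: "\<forall>g\<in>G_p0 m a r. root_unity m (j * g) = 1"
  show "\<forall>q. a (r + q) \<noteq> 0 \<longrightarrow> root_unity m j ^ q = 1"
  proof (intro allI impI)
    fix q
    assume "a (r + q) \<noteq> 0"
    then have "int q mod int m \<in> G_p0 m a r"
      unfolding G_p0_def by (intro generate.incl) blast
    then have "root_unity m (j * (int q mod int m)) = 1"
      using triv by blast
    then show "root_unity m j ^ q = 1"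
      using m by (simp add: root_unity_power root_unity_mult_mod mult.commute)
  qed
next
  assume gens: "\<forall>q. a (r + q) \<noteq> 0 \<longrightarrow> root_unity m j ^ q = 1"
  show "\<forall>g\<in>G_p0 m a r. root_unity m (j * g) = 1"
    unfolding G_p0_def
  proof
    fix g
    assume g: "g \<in> generate (integer_mod_group m) {int q mod int m |q. a (r + q) \<noteq> 0}"
    show "root_unity m (j * g) = 1"
    proof (rule root_unity_eq_1_on_generate[OF m _ _ g])
      show "{int q mod int m |q. a (r + q) \<noteq> 0} \<subseteq> carrier (integer_mod_group m)"
        using m by (auto simp: carrier_integer_mod_group)
      show "root_unity m (j * s) = 1" if "s \<in> {int q mod int m |q. a (r + q) \<noteq> 0}" for s
        using that gens m by (auto simp: root_unity_power root_unity_mult_mod mult.commute)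
    qed
  qed
qed

lemma fourier_c_p0:
  assumes m: "0 < m"
  shows "fourier m (c_p0 m a r) j = (if \<forall>g\<in>G_p0 m a r. root_unity m (j * g) = 1 then 1 else 0)"
proof -
  have H: "subgroup (G_p0 m a r) (integer_mod_group m)"
    using m by (rule subgroup_G_p0)
  then have "card (G_p0 m a r) \<noteq> 0"
    using finite_subgroup_integer_mod_group[OF m H] zero_mem_subgroup_integer_mod_group[OF H]
    by (auto simp: card_eq_0_iff)
  moreover have "fourier m (c_p0 m a r) j
      = of_real (1 / real (card (G_p0 m a r))) * (\<Sum>g\<in>G_p0 m a r. root_unity m (j * g))"
    unfolding c_p0_def fourier_scale fourier_gr_sum[OF m] ..
  ultimately show ?thesis
    unfolding sum_root_unity_subgroup[OF m H] by simp
qed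

section \<open>The iterates in \<open>R[C\<^sub>m]\<close>\<close>

lemma tendsto_fun_iff:
  "(f \<longlongrightarrow> (l :: 'a \<Rightarrow> 'b::topological_space)) F \<longleftrightarrow> (\<forall>i. ((\<lambda>n. f n i) \<longlongrightarrow> l i) F)"
  using limitin_componentwise[of "\<lambda>i. euclidean" UNIV f l F]
  by (simp add: euclidean_product_topology limitin_canonical_iff)

lemma ev_Cm_outside: "l \<notin> {0..<int m} \<Longrightarrow> ev_Cm m f l = 0"
  by (simp add: ev_Cm_def del: atLeastLessThan_iff)

locale cyclic_pgf = prob_coeffs a for a :: "nat \<Rightarrow> real" +
  fixes r m :: nat
  assumes coeff_less_one: "\<And>i. a i < 1"
    and coeff_r: "a r \<noteq> 0" and coeff_below_r: "\<And>i. i < r \<Longrightarrow> a i = 0"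
    and m_pos: "0 < m"
begin

definition trivial_char :: "int \<Rightarrow> bool" where
  "trivial_char j \<longleftrightarrow> (\<forall>g\<in>G_p0 m a r. root_unity m (j * g) = 1)"

text \<open>In the notation of the paper, \<open>limit_Cm x\<close> is \<open>t\<^sup>x c\<^sub>p\<^sub>0 + (e - c\<^sub>p\<^sub>0) a\<close>.\<close>
definition limit_Cm :: "int \<Rightarrow> int \<Rightarrow> real" where
  "limit_Cm x =
    (\<lambda>l. gr_mult m (gr_basis m x) (c_p0 m a r) l + extinction * (gr_basis m 0 l - c_p0 m a r l))"

lemma fourier_iter: "fourier m (ev_Cm m (iter a n)) j = (pgf a ^^ n) (root_unity m j)"
proof -
  have "(\<lambda>k. of_real (iter a n k) * root_unity m j ^ k) sums fourier m (ev_Cm m (iter a n)) j"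
    by (rule fourier_ev_Cm_sums[OF m_pos iter_nonneg]) (use iter_sums_one in \<open>simp add: sums_iff\<close>)
  moreover have "(\<lambda>k. of_real (iter a n k) * root_unity m j ^ k) sums (pgf a ^^ n) (root_unity m j)"
    by (rule iter_powser_sums) simp
  ultimately show ?thesis
    by (rule sums_unique2)
qed

lemma fourier_iter_trivial:
  assumes "trivial_char j"
  shows "fourier m (ev_Cm m (iter a n)) j = root_unity m (j * int r ^ n)"
proof -
  have "root_unity m j ^ i = root_unity m j ^ r" if "a i \<noteq> 0" for i
  proof -
    have "r \<le> i"
      using that coeff_below_r not_less by blast
    then obtain q where "i = r + q"
      using le_Suc_ex by blast
    moreover have "\<forall>q. a (r + q) \<noteq> 0 \<longrightarrow> root_unity m j ^ q = 1"
      using assms m_pos by (simp add: trivial_char_def G_p0_characters_iff)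
    ultimately show ?thesis
      using that by (simp add: power_add)
  qed
  then have "(pgf a ^^ n) (root_unity m j) = root_unity m j ^ (r ^ n)"
    by (rule funpow_pgf_power)
  then show ?thesis
    unfolding fourier_iter by (simp add: root_unity_power mult.commute)
qed

lemma fourier_iter_nontrivial:
  assumes "\<not> trivial_char j"
  shows "(\<lambda>n. fourier m (ev_Cm m (iter a n)) j) \<longlonglongrightarrow> of_real extinction"
proof -
  obtain q where q: "a (r + q) \<noteq> 0" "root_unity m j ^ q \<noteq> 1"
    using assms m_pos by (auto simp: trivial_char_def G_p0_characters_iff)
  have "root_unity m j \<noteq> 0"
    using norm_root_unity[of m j] by (metis norm_zero zero_neq_one)
  then have "root_unity m j ^ r \<noteq> root_unity m j ^ (r + q)"
    using q(2) by (simp add: power_add)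
  moreover have "0 < a r" "0 < a (r + q)"
    using coeff_r q(1) coeff_nonneg by (auto simp: order_less_le)
  ultimately show ?thesis
    unfolding fourier_iter using coeff_less_one by (intro funpow_pgf_unit_tendsto_extinction) auto
qed

lemma fourier_limit_Cm:
  "fourier m (limit_Cm x) j = (if trivial_char j then root_unity m (j * x) else of_real extinction)"
  unfolding limit_Cm_def fourier_add fourier_scale fourier_diff fourier_gr_mult[OF m_pos]
    fourier_gr_basis[OF m_pos] fourier_c_p0[OF m_pos] trivial_char_def[symmetric]
  by simp

lemma limit_Cm_outside: "l \<notin> {0..<int m} \<Longrightarrow> limit_Cm x l = 0"
  by (simp add: limit_Cm_def gr_mult_def gr_basis_def c_p0_def gr_sum_def del: atLeastLessThan_iff)

lemma iter_tendsto_limit_Cm: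
  assumes "\<And>j. trivial_char j \<Longrightarrow> (\<lambda>n. root_unity m (j * int r ^ n)) \<longlonglongrightarrow> root_unity m (j * x)"
  shows "(\<lambda>n. ev_Cm m (iter a n)) \<longlonglongrightarrow> limit_Cm x"
  unfolding tendsto_fun_iff
proof
  fix l
  show "(\<lambda>n. ev_Cm m (iter a n) l) \<longlonglongrightarrow> limit_Cm x l"
  proof (cases "l \<in> {0..<int m}")
    case True
    have "(\<lambda>n. fourier m (ev_Cm m (iter a n)) j) \<longlonglongrightarrow> fourier m (limit_Cm x) j" for j
      using assms[of j] fourier_iter_trivial[of j] fourier_iter_nontrivial[of j]
      by (cases "trivial_char j") (simp_all add: fourier_limit_Cm)
    then show ?thesis
      by (rule tendsto_of_tendsto_fourier[OF m_pos _ True])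
  next
    case False
    then show ?thesis
      by (simp add: limit_Cm_outside ev_Cm_outside)
  qed
qed

lemma convergent_root_unity_if_convergent_iter:
  assumes "convergent (\<lambda>n. ev_Cm m (iter a n))" and "trivial_char j"
  shows "convergent (\<lambda>n. root_unity m (j * int r ^ n))"
proof -
  obtain L where L: "(\<lambda>n. ev_Cm m (iter a n)) \<longlonglongrightarrow> L"
    using assms(1) by (auto simp: convergent_def)
  have "(\<lambda>n. fourier m (ev_Cm m (iter a n)) j) \<longlonglongrightarrow> fourier m L j"
    by (rule tendsto_fourier) (use L in \<open>simp add: tendsto_fun_iff\<close>)
  then show ?thesis
    using fourier_iter_trivial[OF assms(2)] by (auto simp: convergent_def)
qed

lemma coset_eq_iff_trivial_chars:
  assumes "x \<in> {0..<int m}" and "y \<in> {0..<int m}"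
  shows "coset_Cm m x (G_p0 m a r) = coset_Cm m y (G_p0 m a r)
    \<longleftrightarrow> (\<forall>j. trivial_char j \<longrightarrow> root_unity m (j * x) = root_unity m (j * y))"
  unfolding trivial_char_def using assms
  by (rule coset_Cm_eq_iff_characters[OF m_pos subgroup_G_p0[OF m_pos]])

end

lemma mem_coset_Cm_self:
  "subgroup H (integer_mod_group m) \<Longrightarrow> x \<in> {0..<int m} \<Longrightarrow> x \<in> coset_Cm m x H"
  using zero_mem_subgroup_integer_mod_group by (force simp: coset_Cm_def l_coset_def)

locale cyclic_pgf_periodic = cyclic_pgf a r m for a r m +
  fixes d :: nat and ms :: "nat \<Rightarrow> int" and K :: nat
  assumes d_pos: "0 < d" and ms_range: "\<And>i. i < d \<Longrightarrow> ms i \<in> {0..<int m}"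
    and ms_period: "\<And>k i. K \<le> k \<Longrightarrow> i < d \<Longrightarrow> int r ^ (k * d + i) mod int m = ms i"
begin

lemma root_unity_tail:
  assumes "K * d \<le> n"
  shows "root_unity m (j * int r ^ n) = root_unity m (j * ms (n mod d))"
proof -
  have "K \<le> n div d"
    using div_le_mono[OF assms, of d] d_pos by simp
  then have "int r ^ n mod int m = ms (n mod d)"
    using ms_period[of "n div d" "n mod d"] d_pos by simp
  then show ?thesis
    using root_unity_mult_mod[OF m_pos, of j "int r ^ n"] by simp
qed

lemma cosets_eq_if_convergent:
  assumes "convergent (\<lambda>n. ev_Cm m (iter a n))" and "i < d"
  shows "coset_Cm m (ms i) (G_p0 m a r) = coset_Cm m (ms 0) (G_p0 m a r)"
proof -
  have "root_unity m (j * ms i) = root_unity m (j * ms 0)" if "trivial_char j" for j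
    using convergent_periodic_tail_eq[where g = "\<lambda>i. root_unity m (j * ms i)",
        OF convergent_root_unity_if_convergent_iter[OF assms(1) that] root_unity_tail assms(2)] .
  then show ?thesis
    unfolding coset_eq_iff_trivial_chars[OF ms_range[OF assms(2)] ms_range[OF d_pos]] by blast
qed

lemma inter_cosets_nonempty_iff:
  "(\<Inter>i\<in>{..<d}. coset_Cm m (ms i) (G_p0 m a r)) \<noteq> {}
    \<longleftrightarrow> (\<forall>i<d. coset_Cm m (ms i) (G_p0 m a r) = coset_Cm m (ms 0) (G_p0 m a r))"
proof
  assume "(\<Inter>i\<in>{..<d}. coset_Cm m (ms i) (G_p0 m a r)) \<noteq> {}"
  then obtain z where z: "\<And>i. i < d \<Longrightarrow> z \<in> coset_Cm m (ms i) (G_p0 m a r)"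
    by blast
  have "coset_Cm m (ms i) (G_p0 m a r) = coset_Cm m z (G_p0 m a r)" if "i < d" for i
    using m_pos subgroup_G_p0[OF m_pos] ms_range[OF that] z[OF that] by (rule coset_Cm_eq_if_mem)
  then show "\<forall>i<d. coset_Cm m (ms i) (G_p0 m a r) = coset_Cm m (ms 0) (G_p0 m a r)"
    using d_pos by simp
next
  assume "\<forall>i<d. coset_Cm m (ms i) (G_p0 m a r) = coset_Cm m (ms 0) (G_p0 m a r)"
  moreover have "ms 0 \<in> coset_Cm m (ms 0) (G_p0 m a r)"
    using subgroup_G_p0[OF m_pos] ms_range d_pos by (intro mem_coset_Cm_self) auto
  ultimately show "(\<Inter>i\<in>{..<d}. coset_Cm m (ms i) (G_p0 m a r)) \<noteq> {}"
    by blast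
qed

lemma iter_tendsto_if_cosets_eq:
  assumes "\<forall>i<d. coset_Cm m (ms i) (G_p0 m a r) = coset_Cm m (ms 0) (G_p0 m a r)"
  shows "(\<lambda>n. ev_Cm m (iter a n)) \<longlonglongrightarrow> limit_Cm (ms 0)"
proof (rule iter_tendsto_limit_Cm)
  fix j
  assume "trivial_char j"
  then have same: "root_unity m (j * ms i) = root_unity m (j * ms 0)" if "i < d" for i
    using assms that coset_eq_iff_trivial_chars[OF ms_range[OF that] ms_range[OF d_pos]] by blast
  have "root_unity m (j * int r ^ n) = root_unity m (j * ms 0)" if "K * d \<le> n" for n
    using root_unity_tail[OF that] same[of "n mod d"] d_pos by simp
  then have "\<forall>\<^sub>F n in sequentially. root_unity m (j * int r ^ n) = root_unity m (j * ms 0)"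
    unfolding eventually_sequentially by blast
  then show "(\<lambda>n. root_unity m (j * int r ^ n)) \<longlonglongrightarrow> root_unity m (j * ms 0)"
    by (rule tendsto_eventually)
qed

end

theorem theorem4:
  fixes a :: "nat \<Rightarrow> real" and r m d :: nat and ms :: "nat \<Rightarrow> int"
  assumes a_nonneg: "\<forall>i. 0 \<le> a i" and a_lt1: "\<forall>i. a i < 1"
    and a_sums: "a sums 1"
    and r_first: "a r \<noteq> 0" and r_below: "\<forall>i<r. a i = 0"
    and two_nz: "\<exists>q1 q2. q1 \<noteq> q2 \<and> a (r + q1) \<noteq> 0 \<and> a (r + q2) \<noteq> 0"
    and m_pos: "0 < m"
    and d_pos: "1 \<le> d"
    and ms_range: "\<forall>i<d. ms i \<in> {0..<int m}"
    and ms_distinct: "inj_on ms {..<d}"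
    and ms_period: "\<exists>K. \<forall>k\<ge>K. \<forall>i<d. (int r) ^ (k * d + i) mod int m = ms i"
  shows "((\<Inter>i\<in>{..<d}. coset_Cm m (ms i) (G_p0 m a r)) = {} \<longrightarrow>
            \<not> convergent (\<lambda>n. ev_Cm m (iter a n)))
       \<and> ((\<Inter>i\<in>{..<d}. coset_Cm m (ms i) (G_p0 m a r)) \<noteq> {} \<longrightarrow>
            (\<forall>i<d. \<forall>j<d. coset_Cm m (ms i) (G_p0 m a r) = coset_Cm m (ms j) (G_p0 m a r))
          \<and> (\<lambda>n. ev_Cm m (iter a n)) \<longlonglongrightarrow>
               (\<lambda>j. gr_mult m (gr_basis m (ms 0)) (c_p0 m a r) j
                + lim (\<lambda>n. iter a n 0) * (gr_basis m 0 j - c_p0 m a r j)))"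
proof -
  obtain K where K: "\<forall>k\<ge>K. \<forall>i<d. int r ^ (k * d + i) mod int m = ms i"
    using ms_period by blast
  interpret cyclic_pgf_periodic a r m d ms K
    using a_nonneg a_lt1 a_sums r_first r_below m_pos d_pos ms_range K by unfold_locales auto
  let ?C = "\<lambda>i. coset_Cm m (ms i) (G_p0 m a r)" and ?v = "\<lambda>n. ev_Cm m (iter a n)"
  have "\<not> convergent ?v" if "(\<Inter>i\<in>{..<d}. ?C i) = {}"
  proof
    assume "convergent ?v"
    then have "\<forall>i<d. ?C i = ?C 0"
      using cosets_eq_if_convergent by blast
    with that show False
      using inter_cosets_nonempty_iff by blast
  qed
  moreover have "(\<forall>i<d. \<forall>j<d. ?C i = ?C j) \<and> ?v \<longlonglongrightarrow> limit_Cm (ms 0)"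
    if "(\<Inter>i\<in>{..<d}. ?C i) \<noteq> {}"
  proof
    from that have eq: "\<forall>i<d. ?C i = ?C 0"
      by (simp only: inter_cosets_nonempty_iff)
    then show "\<forall>i<d. \<forall>j<d. ?C i = ?C j"
      by metis
    from eq show "?v \<longlonglongrightarrow> limit_Cm (ms 0)"
      by (rule iter_tendsto_if_cosets_eq)
  qed
  ultimately show ?thesis
    unfolding lim_iter_zero limit_Cm_def[symmetric] by blast
qed

end
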